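(* Assume the standing setting below. Let $\alpha\in(0,1/6]$ with $\alpha n$ an integer, let $P_1\subseteq X$ with $|P_1|=\alpha n$, and let $T_\alpha\subseteq X$ be any nonempty set. Let $\mathcal{B}_a$ be a $(\phi_\alpha/15)$-linear bin division of $X$ with respect to $\mathrm{OPT}$. Suppose $n\ge\phi_\alpha/15$, that $\mathcal{B}_a$ is well-represented in $P_1$ for $X$, and that for every $i$ with $|C_i^*|\ge\phi_\alpha$, $C_i^*$ is well-represented in $P_1$ for $X$. Then $$R(X^\alpha_{\mathrm{large}},T_\alpha)\le R(X^\alpha_{\mathrm{large}},\mathrm{OPT})+\frac4\alpha\Big(R(P_1\setminus\mathcal{B}_a(1),\mathrm{OPT})+R(P_1,T_\alpha)\Big).$$
   Context: Standing setting: $(X,\rho)$ is a finite metric space with $|X|=n$; $k\ge 2$ is an integer and $\delta\in(0,1)$; $\log$ is the natural logarithm. For nonempty $T\subseteq X$, $\rho(x,T):=\min_{y\in T}\rho(x,y)$ and $R(S,T):=\sum_{x\in S}\rho(x,T)$; ties in minimizations are broken by a fixed ordering. $\mathrm{OPT}=\{c_1^*,\ldots,c_k^*\}$ is a set of at most $k$ points of $X$ minimizing $R(X,\cdot)$, and $C_i^*:=\{x\in X: i=\arg\min_{j\in[k]}\rho(c_j^*,x)\}$. For $\alpha>0$, $\phi_\alpha:=150\log(32k/\delta)/\alpha$; $X^\alpha_{\mathrm{large}}:=\bigcup\{C_i^*: |C_i^*|\ge\phi_\alpha\}$. For finite $W$, $A,B\subseteq W$, $B$ is well-represented in $A$ for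 $W$ if $|B\cap A|/|B|\in[r/2,\frac32 r]$ with $r=|A|/|W|$; a bin division is well-represented if all its bins are. A $z$-linear bin division ($z>0$) of $W$ with respect to $T$ is a partition $(\mathcal{B}(1),\ldots,\mathcal{B}(L))$ of $W$ with: (1) if $z\le|W|$, $|\mathcal{B}(i)|\ge z(i+1)/2$ for all $i$; otherwise it is trivial, $\mathcal{B}(1):=W$; (2) $|\mathcal{B}(1)|\le\frac52 z$; (3) $|\mathcal{B}(i+1)|/|\mathcal{B}(i)|\le3/2$; (4) $\rho(x,T)\ge\rho(x',T)$ whenever $x\in\mathcal{B}(i)$, $x'\in\mathcal{B}(i+1)$. *)

theory Defs
  imports Complex_Main
begin

definition finite_metric :: "'a set \<Rightarrow> ('a \<Rightarrow> 'a \<Rightarrow> real) \<Rightarrow> bool" where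
  "finite_metric X \<rho> \<longleftrightarrow> finite X \<and>
     (\<forall>x\<in>X. \<forall>y\<in>X. \<rho> x y \<ge> 0 \<and> (\<rho> x y = 0 \<longleftrightarrow> x = y) \<and> \<rho> x y = \<rho> y x) \<and>
     (\<forall>x\<in>X. \<forall>y\<in>X. \<forall>z\<in>X. \<rho> x z \<le> \<rho> x y + \<rho> y z)"

definition dist_set :: "('a \<Rightarrow> 'a \<Rightarrow> real) \<Rightarrow> 'a \<Rightarrow> 'a set \<Rightarrow> real" where
  "dist_set \<rho> x T = Min ((\<lambda>y. \<rho> x y) ` T)"

definition Rcost :: "('a \<Rightarrow> 'a \<Rightarrow> real) \<Rightarrow> 'a set \<Rightarrow> 'a set \<Rightarrow> real" where
  "Rcost \<rho> S T = (\<Sum>x\<in>S. dist_set \<rho> x T)"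

definition is_opt :: "'a set \<Rightarrow> ('a \<Rightarrow> 'a \<Rightarrow> real) \<Rightarrow> nat \<Rightarrow> (nat \<Rightarrow> 'a) \<Rightarrow> bool" where
  "is_opt X \<rho> k c \<longleftrightarrow> c ` {1..k} \<subseteq> X \<and>
     (\<forall>T. T \<subseteq> X \<and> T \<noteq> {} \<and> card T \<le> k \<longrightarrow> Rcost \<rho> X (c ` {1..k}) \<le> Rcost \<rho> X T)"

text \<open>C_i^*: points whose argmin_j rho(c_j, x) is i (ties broken towards the smallest index).\<close>
definition opt_cluster :: "'a set \<Rightarrow> ('a \<Rightarrow> 'a \<Rightarrow> real) \<Rightarrow> nat \<Rightarrow> (nat \<Rightarrow> 'a) \<Rightarrow> nat \<Rightarrow> 'a set" where
  "opt_cluster X \<rho> k c i =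
     {x \<in> X. i = (LEAST j. j \<in> {1..k} \<and> (\<forall>j'\<in>{1..k}. \<rho> (c j) x \<le> \<rho> (c j') x))}"

definition phi :: "nat \<Rightarrow> real \<Rightarrow> real \<Rightarrow> real" where
  "phi k \<delta> \<alpha> = 150 * ln (32 * real k / \<delta>) / \<alpha>"

definition X_large :: "'a set \<Rightarrow> ('a \<Rightarrow> 'a \<Rightarrow> real) \<Rightarrow> nat \<Rightarrow> (nat \<Rightarrow> 'a) \<Rightarrow> real \<Rightarrow> real \<Rightarrow> 'a set" where
  "X_large X \<rho> k c \<delta> \<alpha> =
     \<Union> {opt_cluster X \<rho> k c i | i. i \<in> {1..k} \<and> real (card (opt_cluster X \<rho> k c i)) \<ge> phi k \<delta> \<alpha>}"

definition well_rep :: "'a set \<Rightarrow> 'a set \<Rightarrow> 'a set \<Rightarrow> bool" where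
  "well_rep W A B \<longleftrightarrow>
     (let r = real (card A) / real (card W)
      in r / 2 \<le> real (card (B \<inter> A)) / real (card B) \<and>
         real (card (B \<inter> A)) / real (card B) \<le> 3 / 2 * r)"

definition well_rep_bins :: "'a set \<Rightarrow> 'a set \<Rightarrow> nat \<Rightarrow> (nat \<Rightarrow> 'a set) \<Rightarrow> bool" where
  "well_rep_bins W A L B \<longleftrightarrow> (\<forall>i\<in>{1..L}. well_rep W A (B i))"

definition linear_bin_division ::
  "('a \<Rightarrow> 'a \<Rightarrow> real) \<Rightarrow> real \<Rightarrow> 'a set \<Rightarrow> 'a set \<Rightarrow> nat \<Rightarrow> (nat \<Rightarrow> 'a set) \<Rightarrow> bool" where
  "linear_bin_division \<rho> z W T L B \<longleftrightarrow>
     L \<ge> 1 \<and>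
     (\<Union>i\<in>{1..L}. B i) = W \<and>
     (\<forall>i\<in>{1..L}. B i \<noteq> {}) \<and>
     (\<forall>i\<in>{1..L}. \<forall>j\<in>{1..L}. i \<noteq> j \<longrightarrow> B i \<inter> B j = {}) \<and>
     (if z \<le> real (card W)
      then (\<forall>i\<in>{1..L}. real (card (B i)) \<ge> z * (real i + 1) / 2)
      else L = 1 \<and> B 1 = W) \<and>
     real (card (B 1)) \<le> 5 / 2 * z \<and>
     (\<forall>i\<in>{1..<L}. real (card (B (i + 1))) / real (card (B i)) \<le> 3 / 2) \<and>
     (\<forall>i\<in>{1..<L}. \<forall>x\<in>B i. \<forall>x'\<in>B (i + 1). dist_set \<rho> x T \<ge> dist_set \<rho> x' T)"

end

theory Submission
  imports Defs
begin

text \<open>Every point x of a large cluster C_i with centre c_i satisfies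
  rho(x,T) \<le> rho(x,c_i) + rho(c_i,T), so R(C_i,T) \<le> R(C_i,OPT) + |C_i| rho(c_i,T).
  Conversely rho(c_i,T) \<le> rho(y,c_i) + rho(y,T) for every y in C_i, and averaging this over
  the sample S_i = C_i \<inter> (P_1 - B(1)) gives |S_i| rho(c_i,T) \<le> R(S_i,OPT) + R(S_i,T).
  Well-representation makes |C_i \<inter> P_1| \<ge> \<alpha>|C_i|/2, while the first bin has at most
  5/2 \<cdot> \<phi>/15 = \<phi>/6 \<le> |C_i|/6 points, of which at most a 3\<alpha>/2 fraction lies in P_1; hence
  |S_i| \<ge> \<alpha>|C_i|/4. Summing over the disjoint large clusters yields the claim.\<close>

lemma dist_set_le: "finite T \<Longrightarrow> y \<in> T \<Longrightarrow> dist_set \<rho> x T \<le> \<rho> x y"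
  unfolding dist_set_def by (rule Min_le) auto

lemma dist_set_attained:
  assumes "finite T" "T \<noteq> {}"
  obtains y where "y \<in> T" "dist_set \<rho> x T = \<rho> x y"
proof -
  have "Min ((\<lambda>y. \<rho> x y) ` T) \<in> (\<lambda>y. \<rho> x y) ` T" using assms by (intro Min_in) auto
  thus ?thesis using that unfolding dist_set_def by auto
qed

lemma dist_set_nonneg:
  assumes "finite_metric X \<rho>" "x \<in> X" "T \<subseteq> X" "T \<noteq> {}"
  shows "0 \<le> dist_set \<rho> x T"
proof -
  have "finite T" using assms finite_metric_def finite_subset by metis
  then obtain y where "y \<in> T" "dist_set \<rho> x T = \<rho> x y" using dist_set_attained assms by metis
  thus ?thesis using assms unfolding finite_metric_def by auto
qed

lemma dist_set_triangle:
  assumes "finite_metric X \<rho>" "x \<in> X" "y \<in> X" "T \<subseteq> X" "T \<noteq> {}"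
  shows "dist_set \<rho> x T \<le> \<rho> x y + dist_set \<rho> y T"
proof -
  have fin: "finite T" using assms finite_metric_def finite_subset by metis
  then obtain t where t: "t \<in> T" "dist_set \<rho> y T = \<rho> y t" using dist_set_attained assms by metis
  have "dist_set \<rho> x T \<le> \<rho> x t" using dist_set_le fin t by metis
  also have "\<dots> \<le> \<rho> x y + \<rho> y t" using assms t unfolding finite_metric_def by blast
  finally show ?thesis using t by simp
qed

lemma Rcost_mono:
  assumes "finite_metric X \<rho>" "S \<subseteq> S'" "S' \<subseteq> X" "T \<subseteq> X" "T \<noteq> {}"
  shows "Rcost \<rho> S T \<le> Rcost \<rho> S' T"
proof -
  have "finite S'" using assms finite_metric_def finite_subset by metis
  thus ?thesis
    unfolding Rcost_def using assms dist_set_nonneg[OF assms(1) _ assms(4,5)]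
    by (intro sum_mono2) auto
qed

lemma Rcost_UNION_disjoint:
  assumes "finite I" "\<forall>i\<in>I. finite (C i)" "\<forall>i\<in>I. \<forall>j\<in>I. i \<noteq> j \<longrightarrow> C i \<inter> C j = {}"
  shows "Rcost \<rho> (\<Union>i\<in>I. C i) T = (\<Sum>i\<in>I. Rcost \<rho> (C i) T)"
  unfolding Rcost_def using sum.UNION_disjoint[OF assms] .

lemma opt_cluster_disjoint: "i \<noteq> j \<Longrightarrow> opt_cluster X \<rho> k c i \<inter> opt_cluster X \<rho> k c j = {}"
  unfolding opt_cluster_def by auto

lemma dist_set_opt_cluster:
  assumes metric: "finite_metric X \<rho>" and cX: "c ` {1..k} \<subseteq> X" and k: "k \<ge> 1"
    and x: "x \<in> opt_cluster X \<rho> k c i"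
  shows "dist_set \<rho> x (c ` {1..k}) = \<rho> x (c i)"
proof -
  let ?nearest = "\<lambda>j. j \<in> {1..k} \<and> (\<forall>j'\<in>{1..k}. \<rho> (c j) x \<le> \<rho> (c j') x)"
  have xX: "x \<in> X" and i: "i = (LEAST j. ?nearest j)"
    using x unfolding opt_cluster_def by auto
  have rho_sym: "\<rho> x (c j) = \<rho> (c j) x" if "j \<in> {1..k}" for j
    using metric that xX cX unfolding finite_metric_def by blast
  have fin: "finite (c ` {1..k})" by simp
  have ne: "c ` {1..k} \<noteq> {}" using k by simp
  obtain y where "y \<in> c ` {1..k}" "dist_set \<rho> x (c ` {1..k}) = \<rho> x y"
    by (rule dist_set_attained[OF fin ne])
  then obtain j0 where j0: "j0 \<in> {1..k}" "dist_set \<rho> x (c ` {1..k}) = \<rho> x (c j0)" by auto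
  have "?nearest j0"
    using j0 rho_sym dist_set_le[OF fin, of _ \<rho> x] by fastforce
  hence nearest_i: "?nearest i" unfolding i by (rule LeastI)
  have "\<rho> x (c i) \<le> \<rho> x (c j0)" using nearest_i j0 rho_sym by auto
  moreover have "dist_set \<rho> x (c ` {1..k}) \<le> \<rho> x (c i)" using dist_set_le[OF fin] nearest_i by auto
  ultimately show ?thesis using j0 by simp
qed

lemma Rcost_cluster_transfer:
  assumes metric: "finite_metric X \<rho>" and C: "C \<subseteq> X" and z: "z \<in> X" and S: "S \<subseteq> C"
    and Z: "Z \<subseteq> X" "Z \<noteq> {}" and T: "T \<subseteq> X" "T \<noteq> {}"
    and centre: "\<forall>x\<in>C. dist_set \<rho> x Z = \<rho> x z"
    and size: "real (card C) \<le> K * real (card S)" and K: "0 \<le> K"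
  shows "Rcost \<rho> C T \<le> Rcost \<rho> C Z + K * (Rcost \<rho> S Z + Rcost \<rho> S T)"
proof -
  let ?d = "dist_set \<rho> z T"
  have d_nonneg: "0 \<le> ?d" using dist_set_nonneg[OF metric z T] .
  have "Rcost \<rho> C T \<le> (\<Sum>x\<in>C. dist_set \<rho> x Z + ?d)"
    unfolding Rcost_def
  proof (rule sum_mono)
    fix x assume x: "x \<in> C"
    show "dist_set \<rho> x T \<le> dist_set \<rho> x Z + ?d"
      using dist_set_triangle[OF metric _ z T, of x] x C centre by auto
  qed
  also have "\<dots> = Rcost \<rho> C Z + real (card C) * ?d"
    unfolding Rcost_def by (simp add: sum.distrib)
  finally have C_bound: "Rcost \<rho> C T \<le> Rcost \<rho> C Z + real (card C) * ?d" .
  have "real (card S) * ?d = (\<Sum>y\<in>S. ?d)" by simp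
  also have "\<dots> \<le> (\<Sum>y\<in>S. dist_set \<rho> y Z + dist_set \<rho> y T)"
  proof (rule sum_mono)
    fix y assume y: "y \<in> S"
    hence yX: "y \<in> X" using S C by auto
    have "\<rho> z y = \<rho> y z" using metric z yX unfolding finite_metric_def by blast
    thus "?d \<le> dist_set \<rho> y Z + dist_set \<rho> y T"
      using dist_set_triangle[OF metric z yX T] centre y S by auto
  qed
  also have "\<dots> = Rcost \<rho> S Z + Rcost \<rho> S T"
    unfolding Rcost_def by (simp add: sum.distrib)
  finally have S_bound: "real (card S) * ?d \<le> Rcost \<rho> S Z + Rcost \<rho> S T" .
  have "real (card C) * ?d \<le> K * (real (card S) * ?d)"
    using mult_right_mono[OF size d_nonneg] by simp
  also have "\<dots> \<le> K * (Rcost \<rho> S Z + Rcost \<rho> S T)"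
    using S_bound K by (rule mult_left_mono)
  finally show ?thesis using C_bound by linarith
qed

lemma Rcost_clusters_transfer:
  assumes metric: "finite_metric X \<rho>" and I: "finite I"
    and disjoint: "\<forall>i\<in>I. \<forall>j\<in>I. i \<noteq> j \<longrightarrow> C i \<inter> C j = {}"
    and C: "\<forall>i\<in>I. C i \<subseteq> X" and z: "\<forall>i\<in>I. z i \<in> X" and S: "\<forall>i\<in>I. S i \<subseteq> C i"
    and Z: "Z \<subseteq> X" "Z \<noteq> {}" and T: "T \<subseteq> X" "T \<noteq> {}"
    and centre: "\<forall>i\<in>I. \<forall>x\<in>C i. dist_set \<rho> x Z = \<rho> x (z i)"
    and size: "\<forall>i\<in>I. real (card (C i)) \<le> K * real (card (S i))" and K: "0 \<le> K"
  shows "Rcost \<rho> (\<Union>i\<in>I. C i) T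
         \<le> Rcost \<rho> (\<Union>i\<in>I. C i) Z + K * (Rcost \<rho> (\<Union>i\<in>I. S i) Z + Rcost \<rho> (\<Union>i\<in>I. S i) T)"
proof -
  have fin_C: "\<forall>i\<in>I. finite (C i)" using metric C finite_subset unfolding finite_metric_def by metis
  hence fin_S: "\<forall>i\<in>I. finite (S i)" using S finite_subset by metis
  have disjoint_S: "\<forall>i\<in>I. \<forall>j\<in>I. i \<noteq> j \<longrightarrow> S i \<inter> S j = {}" using disjoint S by blast
  have "Rcost \<rho> (\<Union>i\<in>I. C i) T = (\<Sum>i\<in>I. Rcost \<rho> (C i) T)"
    using Rcost_UNION_disjoint[OF I fin_C disjoint] .
  also have "\<dots> \<le> (\<Sum>i\<in>I. Rcost \<rho> (C i) Z + K * (Rcost \<rho> (S i) Z + Rcost \<rho> (S i) T))"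
    using Rcost_cluster_transfer[OF metric _ _ _ Z T _ _ K] C z S centre size
    by (intro sum_mono) auto
  also have "\<dots> = Rcost \<rho> (\<Union>i\<in>I. C i) Z + K * (Rcost \<rho> (\<Union>i\<in>I. S i) Z + Rcost \<rho> (\<Union>i\<in>I. S i) T)"
    by (simp add: Rcost_UNION_disjoint[OF I fin_C disjoint] Rcost_UNION_disjoint[OF I fin_S disjoint_S]
        sum.distrib flip: sum_distrib_left)
  finally show ?thesis .
qed

lemma well_rep_card_lower:
  assumes "well_rep W A B"
  shows "real (card A) / real (card W) / 2 * real (card B) \<le> real (card (B \<inter> A))"
proof (cases "card B = 0")
  case False
  thus ?thesis using assms unfolding well_rep_def Let_def by (simp add: le_divide_eq)
qed simp

lemma well_rep_card_upper:
  assumes "finite B" "well_rep W A B"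
  shows "real (card (B \<inter> A)) \<le> 3 / 2 * (real (card A) / real (card W)) * real (card B)"
proof (cases "card B = 0")
  case False
  have "real (card (B \<inter> A)) / real (card B) \<le> 3 / 2 * (real (card A) / real (card W))"
    using assms(2) unfolding well_rep_def Let_def by simp
  thus ?thesis using False by (simp add: pos_divide_le_eq)
qed (use assms in simp)

lemma card_Int_diff_well_rep:
  assumes "finite C" "finite D" "well_rep W A C" "well_rep W A D"
  defines "r \<equiv> real (card A) / real (card W)"
  shows "r / 2 * real (card C) - 3 / 2 * r * real (card D) \<le> real (card (C \<inter> (A - D)))"
proof -
  have "card (C \<inter> A) \<le> card (C \<inter> (A - D) \<union> D \<inter> A)"
    using assms(1,2) by (intro card_mono) auto
  also have "\<dots> \<le> card (C \<inter> (A - D)) + card (D \<inter> A)" by (rule card_Un_le)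
  finally show ?thesis
    using well_rep_card_lower[OF assms(3)] well_rep_card_upper[OF assms(2,4)]
    unfolding r_def by linarith
qed

lemma well_rep_sample_avoiding_small_set:
  assumes "finite C" "finite D" "well_rep W A C" "well_rep W A D"
    and ratio: "real (card A) / real (card W) = r" and r: "0 < r"
    and small: "real (card D) \<le> real (card C) / 6"
  shows "real (card C) \<le> 4 / r * real (card (C \<inter> (A - D)))"
proof -
  have "r / 2 * real (card C) - 3 / 2 * r * real (card D) \<le> real (card (C \<inter> (A - D)))"
    using card_Int_diff_well_rep[OF assms(1-4)] unfolding ratio .
  moreover have "r * real (card D) \<le> r * (real (card C) / 6)"
    using small r by (intro mult_left_mono) auto
  ultimately have "r / 4 * real (card C) \<le> real (card (C \<inter> (A - D)))" by linarith
  thus ?thesis using r by (simp add: field_simps)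
qed

lemma phi_pos: "1 \<le> k \<Longrightarrow> 0 < \<delta> \<Longrightarrow> \<delta> < 1 \<Longrightarrow> 0 < \<alpha> \<Longrightarrow> 0 < phi k \<delta> \<alpha>"
  unfolding phi_def by (simp add: field_simps)

theorem lemma12:
  fixes X :: "'a set" and \<rho> :: "'a \<Rightarrow> 'a \<Rightarrow> real" and n k :: nat and \<delta> \<alpha> :: real
    and c :: "nat \<Rightarrow> 'a" and P1 T :: "'a set" and L :: nat and B :: "nat \<Rightarrow> 'a set"
  assumes metric: "finite_metric X \<rho>"
    and n_def: "card X = n"
    and k: "k \<ge> 2"
    and \<delta>: "0 < \<delta>" "\<delta> < 1"
    and opt: "is_opt X \<rho> k c"
    and \<alpha>: "0 < \<alpha>" "\<alpha> \<le> 1 / 6"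
    and \<alpha>n_int: "\<alpha> * real n \<in> \<int>"
    and P1: "P1 \<subseteq> X" "real (card P1) = \<alpha> * real n"
    and T: "T \<subseteq> X" "T \<noteq> {}"
    and bins: "linear_bin_division \<rho> (phi k \<delta> \<alpha> / 15) X (c ` {1..k}) L B"
    and n_ge: "real n \<ge> phi k \<delta> \<alpha> / 15"
    and bins_rep: "well_rep_bins X P1 L B"
    and clusters_rep: "\<forall>i\<in>{1..k}. real (card (opt_cluster X \<rho> k c i)) \<ge> phi k \<delta> \<alpha>
                         \<longrightarrow> well_rep X P1 (opt_cluster X \<rho> k c i)"
  shows "Rcost \<rho> (X_large X \<rho> k c \<delta> \<alpha>) T
         \<le> Rcost \<rho> (X_large X \<rho> k c \<delta> \<alpha>) (c ` {1..k})
           + 4 / \<alpha> * (Rcost \<rho> (P1 - B 1) (c ` {1..k}) + Rcost \<rho> P1 T)"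
proof -
  define Opt C \<phi> where "Opt = c ` {1..k}" and "C = opt_cluster X \<rho> k c" and "\<phi> = phi k \<delta> \<alpha>"
  define I where "I = {i \<in> {1..k}. \<phi> \<le> real (card (C i))}"
  define S where "S i = C i \<inter> (P1 - B 1)" for i
  have finX: "finite X" using metric unfolding finite_metric_def by blast
  have Opt: "Opt \<subseteq> X" "Opt \<noteq> {}" using opt k unfolding is_opt_def Opt_def by auto
  have C_sub: "C i \<subseteq> X" for i unfolding C_def opt_cluster_def by auto
  have \<phi>_pos: "0 < \<phi>" unfolding \<phi>_def using phi_pos k \<delta> \<alpha> by simp
  have ratio: "real (card P1) / real (card X) = \<alpha>" using P1 n_def n_ge \<phi>_pos \<phi>_def by simp
  have B1: "B 1 \<subseteq> X" "well_rep X P1 (B 1)" "real (card (B 1)) \<le> \<phi> / 6"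
    using bins bins_rep unfolding linear_bin_division_def well_rep_bins_def \<phi>_def by auto
  have size: "real (card (C i)) \<le> 4 / \<alpha> * real (card (S i))" if "i \<in> I" for i
  proof (unfold S_def, rule well_rep_sample_avoiding_small_set[OF _ _ _ B1(2) ratio \<alpha>(1)])
    show "finite (C i)" "finite (B 1)" using C_sub B1(1) finX finite_subset by metis+
    show "well_rep X P1 (C i)" "real (card (B 1)) \<le> real (card (C i)) / 6"
      using clusters_rep that B1(3) unfolding I_def C_def \<phi>_def by auto
  qed
  have disjoint: "\<forall>i\<in>I. \<forall>j\<in>I. i \<noteq> j \<longrightarrow> C i \<inter> C j = {}"
    using opt_cluster_disjoint[of _ _ X \<rho> k c] unfolding C_def by blast
  have centre: "\<forall>i\<in>I. \<forall>x\<in>C i. dist_set \<rho> x Opt = \<rho> x (c i)"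
    using dist_set_opt_cluster[OF metric Opt(1)[unfolded Opt_def]] k
    unfolding C_def Opt_def by simp
  have "Rcost \<rho> (\<Union>i\<in>I. C i) T
        \<le> Rcost \<rho> (\<Union>i\<in>I. C i) Opt + 4 / \<alpha> * (Rcost \<rho> (\<Union>i\<in>I. S i) Opt + Rcost \<rho> (\<Union>i\<in>I. S i) T)"
  proof (rule Rcost_clusters_transfer[OF metric _ disjoint _ _ _ Opt T centre])
    show "finite I" unfolding I_def by simp
    show "\<forall>i\<in>I. C i \<subseteq> X" "\<forall>i\<in>I. S i \<subseteq> C i" "0 \<le> 4 / \<alpha>"
      using C_sub \<alpha>(1) unfolding S_def by auto
    show "\<forall>i\<in>I. c i \<in> X" using Opt(1) unfolding I_def Opt_def by auto
  qed (use size in blast)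
  also have "\<dots> \<le> Rcost \<rho> (\<Union>i\<in>I. C i) Opt + 4 / \<alpha> * (Rcost \<rho> (P1 - B 1) Opt + Rcost \<rho> P1 T)"
  proof -
    have samples: "(\<Union>i\<in>I. S i) \<subseteq> P1 - B 1" unfolding S_def by blast
    have "Rcost \<rho> (\<Union>i\<in>I. S i) Opt \<le> Rcost \<rho> (P1 - B 1) Opt"
      using Rcost_mono[OF metric samples _ Opt] P1(1) by blast
    moreover have "Rcost \<rho> (\<Union>i\<in>I. S i) T \<le> Rcost \<rho> P1 T"
      using Rcost_mono[OF metric _ P1(1) T] samples by blast
    ultimately show ?thesis using \<alpha>(1) by (intro add_left_mono mult_left_mono add_mono) simp_all
  qed
  also have "(\<Union>i\<in>I. C i) = X_large X \<rho> k c \<delta> \<alpha>"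
    unfolding X_large_def I_def C_def \<phi>_def by blast
  finally show ?thesis unfolding Opt_def .
qed

end
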